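(* Let $(S,\gamma)$ be a $C^\infty$ surface with boundary in $\mathbf{R}^3$ and $\widetilde S$ a flat $C^1$ extension of $S$. Suppose that the restriction $g|_\gamma$ of the Gauss mapping $g$ of $S$ to $\gamma$ is an immersion. Then for any $p\in\gamma$ there is an open neighbourhood $U$ of $p$ in $\widetilde S\setminus\mathrm{Int}\,S$ such that the Legendre lifting of $U$ projects by $\pi_2$ into the dual-boundary $\widehat\gamma$.
   Context: $S$ is a co-oriented immersed $C^\infty$ surface with boundary curve $\gamma(t)$, unit normal $\boldsymbol n$, Gauss mapping $g:S\to S^2$, $g(x)=\boldsymbol n(x)$. A flat $C^1$ extension of $S$ is a $C^1$ surface $\widetilde S\supset S$ such that $\widetilde S\setminus\mathrm{Int}\,S$ is $C^\infty$ with identically vanishing Gaussian curvature. Let $T_1\mathbf{R}^3=\{(x,v): x\in\mathbf{R}^3, v\in S^2\}$ with contact structure $\{v\cdot dx=0\}$, $\pi_1(x,v)=x$, and $\pi_2:T_1\mathbf{R}^3\to\mathbf{R}\times S^2$, $\pi_2(x,v)=(-x\cdot v,v)$. The Legendre lifting of a co-oriented surface piece $U\subset\widetilde S$ is $\{(x,\boldsymbol n(x)): x\in U\}$, $\boldsymbol n$ the (continuous) unit normal of $\widetilde S$ extending that of $S$. The dual-boundary is $\widehat\gamma=\{(-\gamma(t)\cdot\boldsymbol n(\gamma(t)),\boldsymbol n(\gamma(t)))\}\subset\mathbf{R}\times S^2$. *)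

theory Defs
  imports "HOL-Analysis.Analysis"
begin

text \<open>k-times continuously differentiable maps on an open set of a finite-dimensional
space: C^0 = continuous; C^(k+1) = differentiable and every directional derivative
x \<mapsto> Df(x)v is C^k. (For finite-dimensional domains this is the usual C^k.)\<close>
fun Ck :: "nat \<Rightarrow> 'a::euclidean_space set \<Rightarrow> ('a \<Rightarrow> 'b::real_normed_vector) \<Rightarrow> bool" where
  "Ck 0 S f = continuous_on S f"
| "Ck (Suc k) S f = (f differentiable_on S \<and>
      (\<forall>v. Ck k S (\<lambda>x. frechet_derivative f (at x) v)))"

definition smooth_on :: "'a::euclidean_space set \<Rightarrow> ('a \<Rightarrow> 'b::real_normed_vector) \<Rightarrow> bool" where
  "smooth_on S f \<longleftrightarrow> (\<forall>k. Ck k S f)"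

definition pd_u :: "(real^2 \<Rightarrow> real^3) \<Rightarrow> real^2 \<Rightarrow> real^3" where
  "pd_u X w = frechet_derivative X (at w) (axis 1 1)"
definition pd_v :: "(real^2 \<Rightarrow> real^3) \<Rightarrow> real^2 \<Rightarrow> real^3" where
  "pd_v X w = frechet_derivative X (at w) (axis 2 1)"

definition gauss_curv :: "(real^2 \<Rightarrow> real^3) \<Rightarrow> real^2 \<Rightarrow> real" where
  "gauss_curv X w =
    (let Xu = pd_u X w; Xv = pd_v X w;
         Xuu = pd_u (pd_u X) w; Xuv = pd_v (pd_u X) w; Xvv = pd_v (pd_v X) w;
         n = (1 / norm (cross3 Xu Xv)) *\<^sub>R (cross3 Xu Xv);
         E = Xu \<bullet> Xu; F = Xu \<bullet> Xv; G = Xv \<bullet> Xv;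
         L = Xuu \<bullet> n; M = Xuv \<bullet> n; N = Xvv \<bullet> n
     in (L * N - M\<^sup>2) / (E * G - F\<^sup>2))"

definition bpt :: "real \<Rightarrow> real^2" where
  "bpt t = vector [t, 0]"

text \<open>pi_2 : T_1 R^3 \<rightarrow> R x S^2, (x,v) \<mapsto> (-x.v, v).\<close>
definition pi2 :: "(real^3) \<times> (real^3) \<Rightarrow> real \<times> (real^3)" where
  "pi2 xv = (- (fst xv \<bullet> snd xv), snd xv)"

definition legendre_lift :: "(real^2 \<Rightarrow> real^3) \<Rightarrow> (real^2 \<Rightarrow> real^3) \<Rightarrow> (real^2) set
     \<Rightarrow> ((real^3) \<times> (real^3)) set" where
  "legendre_lift X N V = (\<lambda>w. (X w, N w)) ` V"

definition dual_boundary :: "(real^2 \<Rightarrow> real^3) \<Rightarrow> (real^2 \<Rightarrow> real^3) \<Rightarrow> real set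
     \<Rightarrow> (real \<times> (real^3)) set" where
  "dual_boundary X N T = (\<lambda>t. (- (X (bpt t) \<bullet> N (bpt t)), N (bpt t))) ` T"

end

theory Submission
  imports Defs
begin

text \<open>On the flat side of the extension the Gauss map \<open>n\<close> has vanishing Jacobian
  determinant, so \<open>dn\<close> has rank at most one there (up to the boundary, by continuity).
  Since \<open>g|\<^sub>\<gamma>\<close> is an immersion, \<open>dn\<close> has rank exactly one near \<open>p\<close>, and its kernel
  is a line field transverse to \<open>\<gamma>\<close>: in the chart \<open>(u, v) \<mapsto> (n\<^sub>k, v)\<close> its integral
  curves are the vertical lines, so every point of the flat side close to \<open>p\<close> is joined to
  a point of \<open>\<gamma>\<close> by a curve tangent to \<open>ker dn\<close>. Along such a curve \<open>n\<close> is constant,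
  and so is the support function \<open>x \<cdot> n\<close>, because \<open>d(x \<cdot> n) = dx \<cdot> n + x \<cdot> dn\<close> and
  \<open>dx \<perp> n\<close>. Hence \<open>\<pi>\<^sub>2\<close> maps the Legendre lift of that point into the dual boundary.\<close>

unbundle cross3_syntax

section \<open>Calculus\<close>

lemma has_real_derivative_inner_line:
  fixes f :: "'a::euclidean_space \<Rightarrow> 'b::real_inner"
  assumes "f differentiable at (y + s *\<^sub>R v)"
  shows "((\<lambda>s. c \<bullet> f (y + s *\<^sub>R v)) has_real_derivative
            c \<bullet> frechet_derivative f (at (y + s *\<^sub>R v)) v) (at s)"
proof -
  let ?D = "frechet_derivative f (at (y + s *\<^sub>R v))"
  have lin: "linear ?D"
    using assms frechet_derivative_works has_derivative_linear by blast
  have "((\<lambda>s. y + s *\<^sub>R v) has_derivative (\<lambda>h. h *\<^sub>R v)) (at s)"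
    by (auto intro!: derivative_eq_intros)
  from has_derivative_compose[OF this] assms
  have "((\<lambda>s. f (y + s *\<^sub>R v)) has_derivative (\<lambda>h. ?D (h *\<^sub>R v))) (at s)"
    by (simp add: o_def frechet_derivative_works)
  then have "((\<lambda>s. c \<bullet> f (y + s *\<^sub>R v)) has_derivative (\<lambda>h. c \<bullet> ?D (h *\<^sub>R v))) (at s)"
    by (auto intro!: derivative_eq_intros)
  then show ?thesis
    unfolding has_field_derivative_def
    by (rule has_derivative_eq_rhs) (auto simp: linear_scale[OF lin] algebra_simps)
qed

lemma mixed_second_difference_mvt:
  fixes f :: "'a::euclidean_space \<Rightarrow> 'b::real_inner" and v w :: 'a
  defines "g \<equiv> \<lambda>y. frechet_derivative f (at y) v"
  assumes df: "\<And>y. y \<in> U \<Longrightarrow> f differentiable at y"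
    and dg: "\<And>y. y \<in> U \<Longrightarrow> g differentiable at y"
    and sub: "\<And>s \<tau>. 0 \<le> s \<Longrightarrow> s \<le> t \<Longrightarrow> 0 \<le> \<tau> \<Longrightarrow> \<tau> \<le> t \<Longrightarrow> x + s *\<^sub>R v + \<tau> *\<^sub>R w \<in> U"
    and t: "0 < t"
  obtains \<xi> \<eta> where "0 < \<xi>" "\<xi> < t" "0 < \<eta>" "\<eta> < t"
    "c \<bullet> (f (x + t *\<^sub>R v + t *\<^sub>R w) - f (x + t *\<^sub>R v) - f (x + t *\<^sub>R w) + f x) =
     t * t * (c \<bullet> frechet_derivative g (at (x + \<xi> *\<^sub>R v + \<eta> *\<^sub>R w)) w)"
proof -
  define \<phi> where "\<phi> s = c \<bullet> f ((x + t *\<^sub>R w) + s *\<^sub>R v) - c \<bullet> f (x + s *\<^sub>R v)" for s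
  have "(\<phi> has_real_derivative c \<bullet> g ((x + t *\<^sub>R w) + s *\<^sub>R v) - c \<bullet> g (x + s *\<^sub>R v)) (at s)"
    if "0 \<le> s" "s \<le> t" for s
  proof -
    have "(x + t *\<^sub>R w) + s *\<^sub>R v \<in> U" "x + s *\<^sub>R v \<in> U"
      using sub[of s t] sub[of s 0] that t by (simp_all add: algebra_simps)
    then show ?thesis
      unfolding \<phi>_def g_def by (intro derivative_intros has_real_derivative_inner_line df)
  qed
  from MVT2[OF t this] obtain \<xi> where \<xi>: "0 < \<xi>" "\<xi> < t"
    and e1: "\<phi> t - \<phi> 0 = t * (c \<bullet> g ((x + t *\<^sub>R w) + \<xi> *\<^sub>R v) - c \<bullet> g (x + \<xi> *\<^sub>R v))"
    by auto
  define \<psi> where "\<psi> \<tau> = c \<bullet> g ((x + \<xi> *\<^sub>R v) + \<tau> *\<^sub>R w)" for \<tau>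
  have "(\<psi> has_real_derivative c \<bullet> frechet_derivative g (at ((x + \<xi> *\<^sub>R v) + \<tau> *\<^sub>R w)) w) (at \<tau>)"
    if "0 \<le> \<tau>" "\<tau> \<le> t" for \<tau>
    unfolding \<psi>_def using sub[of \<xi> \<tau>] that \<xi> by (intro has_real_derivative_inner_line dg) auto
  from MVT2[OF t this] obtain \<eta> where \<eta>: "0 < \<eta>" "\<eta> < t"
    and e2: "\<psi> t - \<psi> 0 = t * (c \<bullet> frechet_derivative g (at (x + \<xi> *\<^sub>R v + \<eta> *\<^sub>R w)) w)"
    by auto
  have "c \<bullet> (f (x + t *\<^sub>R v + t *\<^sub>R w) - f (x + t *\<^sub>R v) - f (x + t *\<^sub>R w) + f x) = \<phi> t - \<phi> 0"
    unfolding \<phi>_def by (simp add: algebra_simps)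
  also have "\<dots> = t * (\<psi> t - \<psi> 0)"
    unfolding e1 \<psi>_def by (simp add: algebra_simps)
  finally show ?thesis
    using that \<xi> \<eta> e2 by simp
qed

lemma mixed_derivatives_meet_in_ball:
  fixes f :: "'a::euclidean_space \<Rightarrow> 'b::real_inner" and v w :: 'a
  defines "Df \<equiv> \<lambda>v y. frechet_derivative f (at y) v"
  assumes d: "d > 0"
    and df: "\<And>y. y \<in> ball x d \<Longrightarrow> f differentiable at y"
    and dv: "\<And>y. y \<in> ball x d \<Longrightarrow> Df v differentiable at y"
    and dw: "\<And>y. y \<in> ball x d \<Longrightarrow> Df w differentiable at y"
  obtains P Q where "P \<in> ball x d" "Q \<in> ball x d"
    "c \<bullet> frechet_derivative (Df v) (at P) w = c \<bullet> frechet_derivative (Df w) (at Q) v"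
proof -
  define t where "t = d / (norm v + norm w + 1)"
  have t: "t > 0"
    using d unfolding t_def by (intro divide_pos_pos) (auto intro: add_nonneg_pos)
  have ball: "x + s *\<^sub>R p + \<tau> *\<^sub>R q \<in> ball x d"
    if "(p, q) \<in> {(v, w), (w, v)}" "0 \<le> s" "s \<le> t" "0 \<le> \<tau>" "\<tau> \<le> t" for s \<tau> p q
  proof -
    have "norm (s *\<^sub>R p + \<tau> *\<^sub>R q) \<le> t * norm p + t * norm q"
      using norm_triangle_ineq[of "s *\<^sub>R p" "\<tau> *\<^sub>R q"] that
      by (smt (verit, best) mult_right_mono norm_ge_zero norm_scaleR)
    also have "\<dots> \<le> t * (norm v + norm w)"
      using that t by (auto simp: algebra_simps)
    also have "\<dots> < d"
    proof -
      have "0 < norm v + norm w + 1" by (simp add: add_nonneg_pos)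
      then show ?thesis
        using d by (simp add: t_def pos_divide_less_eq)
    qed
    finally show ?thesis
      using dist_add_cancel[of x 0 "s *\<^sub>R p + \<tau> *\<^sub>R q"] by (simp add: add.assoc)
  qed
  obtain \<xi> \<eta> where "0 < \<xi>" "\<xi> < t" "0 < \<eta>" "\<eta> < t" and m1:
    "c \<bullet> (f (x + t *\<^sub>R v + t *\<^sub>R w) - f (x + t *\<^sub>R v) - f (x + t *\<^sub>R w) + f x) =
     t * t * (c \<bullet> frechet_derivative (Df v) (at (x + \<xi> *\<^sub>R v + \<eta> *\<^sub>R w)) w)"
    using mixed_second_difference_mvt[of "ball x d" f v t x w c] df dv ball[of v w] t
    unfolding Df_def by blast
  moreover obtain \<xi>' \<eta>' where "0 < \<xi>'" "\<xi>' < t" "0 < \<eta>'" "\<eta>' < t" and m2: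
    "c \<bullet> (f (x + t *\<^sub>R w + t *\<^sub>R v) - f (x + t *\<^sub>R w) - f (x + t *\<^sub>R v) + f x) =
     t * t * (c \<bullet> frechet_derivative (Df w) (at (x + \<xi>' *\<^sub>R w + \<eta>' *\<^sub>R v)) v)"
    using mixed_second_difference_mvt[of "ball x d" f w t x v c] df dw ball[of w v] t
    unfolding Df_def by blast
  ultimately show ?thesis
    using that[of "x + \<xi> *\<^sub>R v + \<eta> *\<^sub>R w" "x + \<xi>' *\<^sub>R w + \<eta>' *\<^sub>R v"] ball t
    by (auto simp: algebra_simps)
qed

lemma frechet_derivative_mixed_symmetric:
  fixes f :: "'a::euclidean_space \<Rightarrow> 'b::real_inner" and v w :: 'a
  defines "Df \<equiv> \<lambda>v y. frechet_derivative f (at y) v"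
  assumes U: "open U" and x: "x \<in> U"
    and df: "\<And>y. y \<in> U \<Longrightarrow> f differentiable at y"
    and dv: "\<And>y. y \<in> U \<Longrightarrow> Df v differentiable at y"
    and dw: "\<And>y. y \<in> U \<Longrightarrow> Df w differentiable at y"
    and cvw: "continuous_on U (\<lambda>y. frechet_derivative (Df v) (at y) w)"
    and cwv: "continuous_on U (\<lambda>y. frechet_derivative (Df w) (at y) v)"
  shows "frechet_derivative (Df v) (at x) w = frechet_derivative (Df w) (at x) v"
proof -
  define A where "A = frechet_derivative (Df v) (at x) w"
  define B where "B = frechet_derivative (Df w) (at x) v"
  define c where "c = A - B"
  have small: "norm c \<le> 2 * \<epsilon>" if \<epsilon>: "\<epsilon> > 0" for \<epsilon>
  proof -
    obtain d1 where "d1 > 0" "\<And>y. y \<in> U \<Longrightarrow> dist y x < d1 \<Longrightarrow>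
        dist (frechet_derivative (Df v) (at y) w) A < \<epsilon>"
      using cvw x \<epsilon> unfolding continuous_on_iff A_def by metis
    moreover obtain d2 where "d2 > 0" "\<And>y. y \<in> U \<Longrightarrow> dist y x < d2 \<Longrightarrow>
        dist (frechet_derivative (Df w) (at y) v) B < \<epsilon>"
      using cwv x \<epsilon> unfolding continuous_on_iff B_def by metis
    moreover obtain d3 where "d3 > 0" "ball x d3 \<subseteq> U"
      using U x open_contains_ball by blast
    ultimately obtain d where d: "d > 0" "ball x d \<subseteq> U"
      "\<And>y. y \<in> ball x d \<Longrightarrow> norm (A - frechet_derivative (Df v) (at y) w) < \<epsilon>"
      "\<And>y. y \<in> ball x d \<Longrightarrow> norm (frechet_derivative (Df w) (at y) v - B) < \<epsilon>"
      by (intro that[of "min d1 (min d2 d3)"]) (auto simp: dist_norm norm_minus_commute subset_eq)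
    then obtain P Q where PQ: "P \<in> ball x d" "Q \<in> ball x d"
      "c \<bullet> frechet_derivative (Df v) (at P) w = c \<bullet> frechet_derivative (Df w) (at Q) v"
      using mixed_derivatives_meet_in_ball[of d x f v w c] df dv dw unfolding Df_def by blast
    have "c \<bullet> c = c \<bullet> (A - frechet_derivative (Df v) (at P) w)
                 + c \<bullet> (frechet_derivative (Df w) (at Q) v - B)"
      using PQ(3) by (simp add: c_def inner_diff_right)
    also have "\<dots> \<le> norm c * \<epsilon> + norm c * \<epsilon>"
      using d(3)[OF PQ(1)] d(4)[OF PQ(2)]
      by (intro add_mono order.trans[OF norm_cauchy_schwarz] mult_left_mono) auto
    finally have "norm c * norm c \<le> norm c * (2 * \<epsilon>)"
      by (simp add: dot_square_norm power2_eq_square[symmetric] algebra_simps)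
    then show ?thesis
      using \<epsilon> by (cases "norm c = 0") auto
  qed
  have "norm c = 0"
    using small[of "norm c / 4"] by fastforce
  then show ?thesis by (simp add: c_def A_def B_def)
qed

lemma frechet_derivative_cong_open:
  assumes "open S" "x \<in> S" "\<And>y. y \<in> S \<Longrightarrow> f y = g y"
  shows "frechet_derivative f (at x) = frechet_derivative g (at x)"
proof -
  have "(f has_derivative D) (at x) \<longleftrightarrow> (g has_derivative D) (at x)" for D
  proof
    show "(g has_derivative D) (at x)" if "(f has_derivative D) (at x)"
      using that assms(1,2) by (rule has_derivative_transform_within_open) (simp add: assms(3))
    show "(f has_derivative D) (at x)" if "(g has_derivative D) (at x)"
      using that assms(1,2) by (rule has_derivative_transform_within_open) (simp add: assms(3))
  qed
  then show ?thesis
    by (simp add: frechet_derivative_def)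
qed

lemma frechet_derivative_eq_on_lower_halfplane:
  fixes f g :: "real^2 \<Rightarrow> 'b::real_normed_vector"
  assumes U: "open U" and x: "x \<in> U" "x$2 \<le> 0"
    and df: "f differentiable at x" and dg: "g differentiable at x"
    and eq: "\<And>y. y \<in> U \<Longrightarrow> y$2 \<le> 0 \<Longrightarrow> f y = g y"
  shows "frechet_derivative f (at x) = frechet_derivative g (at x)"
proof -
  define H where "H = {y\<in>U. y$2 \<le> 0}"
  have "(f has_derivative frechet_derivative f (at x)) (at x within H)"
    using df by (simp add: frechet_derivative_works has_derivative_at_withinI)
  then have "(g has_derivative frechet_derivative f (at x)) (at x within H)"
    by (rule has_derivative_transform_within[where d = 1]) (use x eq in \<open>simp_all add: H_def\<close>)
  moreover have "(g has_derivative frechet_derivative g (at x)) (at x within H)"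
    using dg frechet_derivative_works has_derivative_at_withinI by blast
  moreover have "\<exists>d. 0 < \<bar>d\<bar> \<and> \<bar>d\<bar> < e \<and> x + d *\<^sub>R i \<in> H"
    if i: "i \<in> Basis" and e: "e > 0" for i e
  proof -
    obtain r where r: "r > 0" "ball x r \<subseteq> U" using U x open_contains_ball by blast
    obtain j where ij: "i = axis j 1" using i by (auto simp: Basis_vec_def)
    define d where "d = - min (e/2) (r/2)"
    have d: "0 < \<bar>d\<bar>" "\<bar>d\<bar> < e" "\<bar>d\<bar> < r" "d \<le> 0"
      using r e by (auto simp: d_def)
    have "x + d *\<^sub>R i \<in> ball x r"
      using d ij by (simp add: dist_norm)
    moreover have "i $ 2 \<ge> 0"
      using ij by (simp add: axis_def)
    then have "(x + d *\<^sub>R i) $ 2 \<le> 0"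
      using x(2) mult_nonpos_nonneg[OF d(4)] by (simp add: add_nonpos_nonpos)
    ultimately have "x + d *\<^sub>R i \<in> H"
      using r(2) by (auto simp: H_def)
    with d show ?thesis by blast
  qed
  ultimately show ?thesis
    by (rule frechet_derivative_unique_within)
qed

lemma has_derivative_inner_const:
  fixes f g :: "'a::real_normed_vector \<Rightarrow> 'b::real_inner"
  assumes "open U" "x \<in> U" "\<And>y. y \<in> U \<Longrightarrow> f y \<bullet> g y = k"
    and "(f has_derivative f') (at x)" "(g has_derivative g') (at x)"
  shows "f x \<bullet> g' h + f' h \<bullet> g x = 0"
proof -
  have "((\<lambda>y. k) has_derivative (\<lambda>h. f x \<bullet> g' h + f' h \<bullet> g x)) (at x)"
    using has_derivative_inner[OF assms(4,5)] assms(1-3)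
    by (rule has_derivative_transform_within_open) simp
  then have "(\<lambda>h. f x \<bullet> g' h + f' h \<bullet> g x) = (\<lambda>h. 0)"
    using has_derivative_const has_derivative_unique by blast
  then show ?thesis by metis
qed

lemma continuous_on_eq_0_on_lower_halfplane:
  fixes f :: "real^2 \<Rightarrow> 'b::real_normed_vector"
  assumes U: "open U" "x \<in> U" "x$2 \<le> 0" and c: "continuous_on U f"
    and z: "\<And>y. y \<in> U \<Longrightarrow> y$2 < 0 \<Longrightarrow> f y = 0"
  shows "f x = 0"
proof -
  define y where "y k = x - inverse (real (Suc k)) *\<^sub>R axis 2 1" for k
  have "y \<longlonglongrightarrow> x - 0 *\<^sub>R axis 2 1"
    unfolding y_def by (intro tendsto_intros LIMSEQ_inverse_real_of_nat)
  then have ly: "y \<longlonglongrightarrow> x" by simp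
  then have "eventually (\<lambda>k. y k \<in> U) sequentially"
    using U(1,2) by (simp add: tendsto_def)
  moreover have "y k $ 2 < 0" for k
    using U(3) by (simp add: y_def axis_def) (smt (verit) of_nat_0_le_iff inverse_positive_iff_positive)
  ultimately have "eventually (\<lambda>k. f (y k) = 0) sequentially"
    by (simp add: eventually_mono z)
  then have "(\<lambda>k. f (y k)) \<longlonglongrightarrow> 0" by (rule tendsto_eventually)
  moreover have "(\<lambda>k. f (y k)) \<longlonglongrightarrow> f x"
    using c U ly continuous_on_eq_continuous_at isCont_tendsto_compose by blast
  ultimately show ?thesis using LIMSEQ_unique by blast
qed

lemma constant_along_curve_in_kernel:
  fixes F :: "'a::real_normed_vector \<Rightarrow> 'b::real_normed_vector"
  assumes "a \<le> b"
    and dG: "\<And>\<tau>. \<tau> \<in> {a..b} \<Longrightarrow> (G has_derivative (\<lambda>h. h *\<^sub>R v \<tau>)) (at \<tau>)"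
    and dF: "\<And>\<tau>. \<tau> \<in> {a..b} \<Longrightarrow> (F has_derivative DF (G \<tau>)) (at (G \<tau>))"
    and kernel: "\<And>\<tau>. \<tau> \<in> {a..b} \<Longrightarrow> DF (G \<tau>) (v \<tau>) = 0"
  shows "F (G a) = F (G b)"
proof -
  have "((F \<circ> G) has_derivative (\<lambda>h. 0)) (at \<tau> within {a..b})" if "\<tau> \<in> {a..b}" for \<tau>
  proof -
    have "linear (DF (G \<tau>))" using dF[OF that] has_derivative_linear by blast
    then have "DF (G \<tau>) (h *\<^sub>R v \<tau>) = 0" for h
      using kernel[OF that] by (simp add: linear_scale)
    moreover have "((\<lambda>t. F (G t)) has_derivative (\<lambda>h. DF (G \<tau>) (h *\<^sub>R v \<tau>))) (at \<tau>)"
      using has_derivative_compose[OF dG[OF that] dF[OF that]] .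
    ultimately show ?thesis
      by (simp add: o_def has_derivative_at_withinI)
  qed
  with has_derivative_zero_constant[of "{a..b}" "F \<circ> G"]
  obtain C where "\<forall>\<tau>\<in>{a..b}. (F \<circ> G) \<tau> = C"
    by auto
  then show ?thesis using assms(1) by simp
qed

lemma Ck_subset: "Ck k U f \<Longrightarrow> V \<subseteq> U \<Longrightarrow> Ck k V f"
  by (induction k arbitrary: f) (auto intro: continuous_on_subset differentiable_on_subset)

lemma Ck1_has_derivative:
  "open U \<Longrightarrow> Ck 1 U f \<Longrightarrow> x \<in> U \<Longrightarrow> (f has_derivative frechet_derivative f (at x)) (at x)"
  by (simp add: differentiable_on_eq_differentiable_at frechet_derivative_works)

lemma Ck1_continuous_derivative:
  "Ck 1 U f \<Longrightarrow> continuous_on U (\<lambda>x. frechet_derivative f (at x) v)"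
  by (simp del: Ck.simps(2) add: Ck.simps(2)[of 0])

lemma Ck1_continuous: "Ck 1 U f \<Longrightarrow> continuous_on U f"
  by (simp add: differentiable_imp_continuous_on)

lemma Ck2_derivative_Ck1: "Ck 2 U f \<Longrightarrow> Ck 1 U (\<lambda>x. frechet_derivative f (at x) v)"
  by (simp add: numeral_2_eq_2)

lemma Ck2_Ck1: assumes "Ck 2 U f" shows "Ck 1 U f"
  using assms Ck1_continuous[OF Ck2_derivative_Ck1[OF assms]] by (simp add: numeral_2_eq_2)

lemma inverse_function_theorem_Ck1:
  fixes f :: "'a::euclidean_space \<Rightarrow> 'a"
  assumes U: "open U" and f: "Ck 1 U f" and x0: "x0 \<in> U"
    and inj: "inj (frechet_derivative f (at x0))"
  obtains U' V g g' where "open U'" "U' \<subseteq> U" "x0 \<in> U'" "open V" "f x0 \<in> V"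
    "homeomorphism U' V f g"
    "\<And>y. y \<in> V \<Longrightarrow> (g has_derivative g' y) (at y)"
    "\<And>y. y \<in> V \<Longrightarrow> bij (frechet_derivative f (at (g y)))"
    "\<And>y h. y \<in> V \<Longrightarrow> frechet_derivative f (at (g y)) (g' y h) = h"
proof -
  define f' where "f' x = Blinfun (frechet_derivative f (at x))" for x
  have df: "(f has_derivative frechet_derivative f (at x)) (at x)" if "x \<in> U" for x
    using Ck1_has_derivative[OF U f that] .
  have f': "blinfun_apply (f' x) = frechet_derivative f (at x)" if "x \<in> U" for x
    unfolding f'_def using df[OF that] has_derivative_bounded_linear bounded_linear_Blinfun_apply
    by blast
  have "continuous_on U f'"
  proof (rule continuous_on_blinfun_componentwise)
    fix i :: 'a
    show "continuous_on U (\<lambda>x. f' x i)"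
      using Ck1_continuous_derivative[OF f, of i] f' by (simp cong: continuous_on_cong)
  qed
  moreover obtain L where L: "linear L" "L \<circ> frechet_derivative f (at x0) = id"
    using linear_injective_left_inverse[OF has_derivative_linear[OF df[OF x0]] inj] by blast
  then have "Blinfun L o\<^sub>L f' x0 = id_blinfun"
    by (intro blinfun_eqI)
       (simp add: f'[OF x0] bounded_linear_Blinfun_apply linear_conv_bounded_linear pointfree_idE)
  moreover have "(f has_derivative blinfun_apply (f' x)) (at x)" if "x \<in> U" for x
    using df f' that by simp
  ultimately obtain U' V g g' where U': "open U'" "U' \<subseteq> U" "x0 \<in> U'" "open V" "f x0 \<in> V"
      "homeomorphism U' V f g" "\<And>y. y \<in> V \<Longrightarrow> (g has_derivative g' y) (at y)"
      and g': "\<And>y. y \<in> V \<Longrightarrow> g' y = inv (blinfun_apply (f' (g y)))"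
      and bij: "\<And>y. y \<in> V \<Longrightarrow> bij (blinfun_apply (f' (g y)))"
    using inverse_function_theorem[OF U _ _ x0] by blast
  moreover have "g y \<in> U" if "y \<in> V" for y
    using U'(2,6) that by (auto simp: homeomorphism_def)
  ultimately show ?thesis
    using that[of U' V g g'] by (auto simp: f' bij_is_surj surj_f_inv_f)
qed

section \<open>Linear algebra in \<open>\<real>\<^sup>3\<close>\<close>

lemma linear_real2_expand:
  fixes L :: "real^2 \<Rightarrow> 'b::real_vector"
  assumes "linear L"
  shows "L h = h$1 *\<^sub>R L (axis 1 1) + h$2 *\<^sub>R L (axis 2 1)"
proof -
  have "h = h$1 *\<^sub>R axis 1 1 + h$2 *\<^sub>R (axis 2 1 :: real^2)"
    by (simp add: vec_eq_iff forall_2 axis_def)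
  then have "L h = L (h$1 *\<^sub>R axis 1 1 + h$2 *\<^sub>R axis 2 1)"
    by simp
  then show ?thesis
    by (simp add: linear_add[OF assms] linear_scale[OF assms])
qed

lemma cross_eq_0_imp_multiple:
  fixes a b :: "real^3"
  assumes "a \<times> b = 0" "a \<noteq> 0"
  obtains l where "b = l *\<^sub>R a"
proof -
  have "a = 0 \<or> b = 0 \<or> (\<exists>c. b = c *\<^sub>R a)"
    using assms(1) cross_eq_0 collinear_lemma by blast
  then show ?thesis
    using assms(2) that[of 0] that by auto
qed

lemma cross_eq_0_if_orthogonal_det:
  fixes p q a b :: "real^3"
  assumes "p \<bullet> (a \<times> b) = 0" "q \<bullet> (a \<times> b) = 0" "a \<times> b \<noteq> 0"
    and "(p \<bullet> a) * (q \<bullet> b) - (p \<bullet> b) * (q \<bullet> a) = 0"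
  shows "p \<times> q = 0"
proof -
  have "(p \<times> q) \<bullet> (a \<times> b) = 0"
    using assms(4) by (simp add: dot_cross)
  moreover have "(a \<times> b) \<times> (p \<times> q) = 0"
    using Lagrange[of "a \<times> b" p q] assms(1,2) by (simp add: inner_commute)
  then have "(p \<times> q) \<times> (a \<times> b) = 0"
    using cross_skew[of "p \<times> q" "a \<times> b"] by simp
  ultimately have "norm (p \<times> q) * norm (a \<times> b) = 0"
    using norm_cross_dot[of "p \<times> q" "a \<times> b"] by simp
  then show ?thesis
    using assms(3) by simp
qed

lemma inj_linear_cross_axis_neq_0:
  fixes L :: "real^2 \<Rightarrow> real^3"
  assumes "linear L" "inj L"
  shows "L (axis 1 1) \<times> L (axis 2 1) \<noteq> 0"
proof
  assume cross: "L (axis 1 1) \<times> L (axis 2 1) = 0"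
  have "L (axis 1 1) \<noteq> L 0"
    using assms(2) by (simp add: inj_eq)
  then have "L (axis 1 1) \<noteq> 0"
    using linear_0[OF assms(1)] by simp
  with cross obtain l where "L (axis 2 1) = l *\<^sub>R L (axis 1 1)"
    by (rule cross_eq_0_imp_multiple)
  then have "L (axis 2 1) = L (l *\<^sub>R axis 1 1)"
    using assms(1) by (simp add: linear_scale)
  then have "(axis 2 1 :: real^2) $ 2 = (l *\<^sub>R axis 1 1 :: real^2) $ 2"
    using assms(2) by (simp add: inj_eq)
  then show False
    by (simp add: axis_def)
qed

lemma rank_le_1_linear_eq_0:
  fixes L :: "real^2 \<Rightarrow> real^3"
  assumes L: "linear L" and rank: "L (axis 1 1) \<times> L (axis 2 1) = 0"
    and k: "L (axis 1 1) $ k \<noteq> 0" and h: "L h $ k = 0"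
  shows "L h = 0"
proof -
  have "L (axis 1 1) \<noteq> 0"
    using k by auto
  with rank obtain l where l: "L (axis 2 1) = l *\<^sub>R L (axis 1 1)"
    by (rule cross_eq_0_imp_multiple)
  then have Lh: "L h = (h$1 + l * h$2) *\<^sub>R L (axis 1 1)"
    using linear_real2_expand[OF L, of h] by (simp add: algebra_simps)
  then have "h$1 + l * h$2 = 0"
    using h k by simp
  then show ?thesis
    using Lh by simp
qed

lemma parallel_unit_vectors:
  fixes N m :: "real^3"
  assumes "norm N = 1" "norm m = 1" "N \<times> m = 0"
  shows "N = m \<or> N = - m"
proof -
  have "m \<times> N = 0"
    using assms(3) cross_skew[of N m] by simp
  moreover have "m \<noteq> 0"
    using assms(2) by auto
  ultimately obtain l where l: "N = l *\<^sub>R m"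
    by (rule cross_eq_0_imp_multiple)
  then have "\<bar>l\<bar> = 1"
    using assms(1,2) by simp
  then show ?thesis
    using l by (auto simp: abs_if split: if_splits)
qed

lemma continuous_parallel_unit_fields:
  fixes N m :: "'a::topological_space \<Rightarrow> real^3"
  assumes S: "connected S" and "continuous_on S N" "continuous_on S m"
    and unit: "\<And>x. x \<in> S \<Longrightarrow> norm (N x) = 1 \<and> norm (m x) = 1"
    and par: "\<And>x. x \<in> S \<Longrightarrow> N x \<times> m x = 0"
  obtains \<sigma> :: real where "\<sigma> = 1 \<or> \<sigma> = -1" "\<And>x. x \<in> S \<Longrightarrow> N x = \<sigma> *\<^sub>R m x"
proof -
  have sign: "N x = (N x \<bullet> m x) *\<^sub>R m x \<and> N x \<bullet> m x \<in> {1, -1}" if "x \<in> S" for x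
  proof -
    have "m x \<bullet> m x = 1"
      using unit[OF that] by (simp add: dot_square_norm)
    moreover have "N x = m x \<or> N x = - m x"
      using unit[OF that] par[OF that] by (intro parallel_unit_vectors) auto
    ultimately show ?thesis
      by auto
  qed
  have "(\<lambda>x. N x \<bullet> m x) constant_on S"
  proof (rule continuous_finite_range_constant[OF S])
    show "continuous_on S (\<lambda>x. N x \<bullet> m x)"
      using assms(2,3) by (intro continuous_intros)
    have "(\<lambda>x. N x \<bullet> m x) ` S \<subseteq> {1, -1}"
      using sign by blast
    then show "finite ((\<lambda>x. N x \<bullet> m x) ` S)"
      by (rule finite_subset) simp
  qed
  then obtain \<sigma> where \<sigma>: "\<And>x. x \<in> S \<Longrightarrow> N x \<bullet> m x = \<sigma>"
    unfolding constant_on_def by blast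
  show ?thesis
  proof (cases "S = {}")
    case True
    then show ?thesis
      using that[of 1] by simp
  next
    case False
    then obtain x0 where x0: "x0 \<in> S"
      by blast
    have "\<sigma> = 1 \<or> \<sigma> = -1"
      using sign[OF x0] \<sigma>[OF x0] by simp
    moreover have "N x = \<sigma> *\<^sub>R m x" if "x \<in> S" for x
      using sign[OF that] \<sigma>[OF that] by simp
    ultimately show ?thesis
      using that by blast
  qed
qed

section \<open>The unit normal and the Gauss map of a flat surface\<close>

definition unit_normal :: "(real^2 \<Rightarrow> real^3) \<Rightarrow> real^2 \<Rightarrow> real^3" where
  "unit_normal X w = (1 / norm (pd_u X w \<times> pd_v X w)) *\<^sub>R (pd_u X w \<times> pd_v X w)"

lemma unit_normal_orthogonal:
  "unit_normal X w \<bullet> pd_u X w = 0" "unit_normal X w \<bullet> pd_v X w = 0"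
  by (simp_all add: unit_normal_def dot_cross_self)

lemma unit_normal_orthogonal_derivative:
  assumes "linear (frechet_derivative Z (at x))"
  shows "frechet_derivative Z (at x) h \<bullet> unit_normal Z x = 0"
  using linear_real2_expand[OF assms, of h] unit_normal_orthogonal[of Z x]
  by (simp add: pd_u_def pd_v_def inner_add_right inner_commute)

lemma norm_unit_normal: "pd_u X w \<times> pd_v X w \<noteq> 0 \<Longrightarrow> norm (unit_normal X w) = 1"
  by (simp add: unit_normal_def)

lemma cross_eq_norm_scaleR_unit_normal:
  "pd_u X w \<times> pd_v X w = norm (pd_u X w \<times> pd_v X w) *\<^sub>R unit_normal X w"
  by (cases "pd_u X w \<times> pd_v X w = 0") (simp_all add: unit_normal_def)

lemma orthogonal_imp_parallel_unit_normal:
  assumes "N \<bullet> pd_u X w = 0" "N \<bullet> pd_v X w = 0"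
  shows "N \<times> unit_normal X w = 0"
proof -
  have "N \<times> (pd_u X w \<times> pd_v X w) = 0"
    using Lagrange[of N "pd_u X w" "pd_v X w"] assms by simp
  then show ?thesis
    by (simp add: unit_normal_def cross_mult_right)
qed

lemma pd_u_eq: "pd_u X = (\<lambda>w. frechet_derivative X (at w) (axis 1 1))"
  and pd_v_eq: "pd_v X = (\<lambda>w. frechet_derivative X (at w) (axis 2 1))"
  by (simp_all add: pd_u_def[abs_def] pd_v_def[abs_def])

lemma Ck2_pd_Ck1: "Ck 2 U X \<Longrightarrow> Ck 1 U (pd_u X)" "Ck 2 U X \<Longrightarrow> Ck 1 U (pd_v X)"
  unfolding pd_u_eq pd_v_eq by (erule Ck2_derivative_Ck1)+

lemma pd_v_pd_u_commute:
  assumes U: "open U" and Z: "Ck 2 U Z" and x: "x \<in> U"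
  shows "pd_v (pd_u Z) x = pd_u (pd_v Z) x"
proof -
  have "frechet_derivative (\<lambda>y. frechet_derivative Z (at y) (axis 1 1)) (at x) (axis 2 1) =
        frechet_derivative (\<lambda>y. frechet_derivative Z (at y) (axis 2 1)) (at x) (axis 1 1)"
    using Ck1_has_derivative[OF U Ck2_Ck1[OF Z]] Ck1_has_derivative[OF U Ck2_derivative_Ck1[OF Z]]
      Ck1_continuous_derivative[OF Ck2_derivative_Ck1[OF Z]]
    by (intro frechet_derivative_mixed_symmetric[OF U x]) (auto intro: differentiableI)
  then show ?thesis
    by (simp add: pd_u_eq pd_v_eq)
qed

lemma gauss_curv_unit_normal:
  fixes X :: "real^2 \<Rightarrow> real^3" and w :: "real^2"
  defines "n \<equiv> unit_normal X w"
  shows "gauss_curv X w =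
    ((pd_u (pd_u X) w \<bullet> n) * (pd_v (pd_v X) w \<bullet> n) - (pd_v (pd_u X) w \<bullet> n)\<^sup>2)
      / (norm (pd_u X w \<times> pd_v X w))\<^sup>2"
  using norm_cross[of "pd_u X w" "pd_v X w"]
  by (simp add: gauss_curv_def Let_def n_def unit_normal_def dot_square_norm)

lemma gauss_curv_cong_open:
  assumes "open S" "x \<in> S" "\<And>y. y \<in> S \<Longrightarrow> X y = Y y"
  shows "gauss_curv X x = gauss_curv Y x"
proof -
  have pd: "pd_u X y = pd_u Y y" "pd_v X y = pd_v Y y" if "y \<in> S" for y
    using frechet_derivative_cong_open[OF assms(1) that assms(3)] by (simp_all add: pd_u_def pd_v_def)
  have "frechet_derivative (pd_u X) (at x) = frechet_derivative (pd_u Y) (at x)"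
    "frechet_derivative (pd_v X) (at x) = frechet_derivative (pd_v Y) (at x)"
    using frechet_derivative_cong_open[OF assms(1,2)] pd by auto
  then show ?thesis
    using pd assms(2) by (simp add: gauss_curv_def Let_def pd_u_def[of "pd_u _"]
        pd_v_def[of "pd_u _"] pd_v_def[of "pd_v _"])
qed

lemma has_derivative_normalized_cross3:
  fixes a b :: "'a::real_normed_vector \<Rightarrow> real^3"
  assumes da: "(a has_derivative Da) (at x)" and db: "(b has_derivative Db) (at x)"
    and c0: "a x \<times> b x \<noteq> 0"
  shows "((\<lambda>y. inverse (norm (a y \<times> b y)) *\<^sub>R (a y \<times> b y)) has_derivative
      (\<lambda>h. inverse (norm (a x \<times> b x)) *\<^sub>R (Da h \<times> b x + a x \<times> Db h)
        - (((a x \<times> b x) \<bullet> (Da h \<times> b x + a x \<times> Db h)) / norm (a x \<times> b x) ^ 3) *\<^sub>R (a x \<times> b x)))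
      (at x)"
proof -
  define c where "c y = a y \<times> b y" for y
  define Dc where "Dc h = Da h \<times> b x + a x \<times> Db h" for h
  have dc: "(c has_derivative Dc) (at x)"
    using bounded_bilinear.FDERIV[OF bilinear_conv_bounded_bilinear[THEN iffD1, OF bilinear_cross]
        da db]
    unfolding c_def Dc_def by (simp add: add.commute)
  have "((\<lambda>y. norm (c y)) has_derivative (\<lambda>h. Dc h \<bullet> sgn (c x))) (at x)"
    using has_derivative_compose[OF dc has_derivative_norm[of "c x"]] c0 by (simp add: c_def)
  moreover have "norm (c x) \<noteq> 0"
    using c0 by (simp add: c_def)
  ultimately have "((\<lambda>y. inverse (norm (c y)) *\<^sub>R c y) has_derivative
      (\<lambda>h. inverse (norm (c x)) *\<^sub>R Dc h
        + (- (inverse (norm (c x)) * (Dc h \<bullet> sgn (c x)) * inverse (norm (c x)))) *\<^sub>R c x)) (at x)"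
    by (intro has_derivative_scaleR Deriv.has_derivative_inverse dc)
  then show ?thesis
    unfolding c_def[symmetric] Dc_def[symmetric]
    by (rule has_derivative_eq_rhs) (simp add: fun_eq_iff sgn_div_norm inner_commute field_simps
        power3_eq_cube)
qed

lemma unit_normal_Ck1:
  assumes U: "open U" and Z: "Ck 2 U Z" and c: "\<And>x. x \<in> U \<Longrightarrow> pd_u Z x \<times> pd_v Z x \<noteq> 0"
  shows "Ck 1 U (unit_normal Z)"
proof -
  define a where "a = pd_u Z"
  define b where "b = pd_v Z"
  define Dn where "Dn x h = inverse (norm (a x \<times> b x)) *\<^sub>R
      (frechet_derivative a (at x) h \<times> b x + a x \<times> frechet_derivative b (at x) h)
    - (((a x \<times> b x) \<bullet> (frechet_derivative a (at x) h \<times> b x + a x \<times> frechet_derivative b (at x) h))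
        / norm (a x \<times> b x) ^ 3) *\<^sub>R (a x \<times> b x)" for x h
  have a: "Ck 1 U a" and b: "Ck 1 U b"
    using Ck2_pd_Ck1[OF Z] by (simp_all add: a_def b_def)
  have dn: "(unit_normal Z has_derivative Dn x) (at x)" if "x \<in> U" for x
    using has_derivative_normalized_cross3[OF Ck1_has_derivative[OF U a that]
        Ck1_has_derivative[OF U b that]] c[OF that]
    unfolding Dn_def a_def b_def unit_normal_def[abs_def] by (simp add: inverse_eq_divide)
  have "continuous_on U (\<lambda>x. Dn x h)" for h
    unfolding Dn_def using c Ck1_continuous[OF a] Ck1_continuous[OF b]
      Ck1_continuous_derivative[OF a] Ck1_continuous_derivative[OF b]
    by (intro continuous_intros continuous_on_cross) (auto simp: a_def b_def)
  moreover have "frechet_derivative (unit_normal Z) (at x) = Dn x" if "x \<in> U" for x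
    using dn[OF that] by (rule frechet_derivative_at[symmetric])
  ultimately have "continuous_on U (\<lambda>x. frechet_derivative (unit_normal Z) (at x) h)" for h
    by (simp cong: continuous_on_cong)
  moreover have "unit_normal Z differentiable_on U"
    using dn by (auto intro: differentiable_at_imp_differentiable_on differentiableI)
  ultimately show ?thesis
    by simp
qed

lemma weingarten_equations:
  assumes U: "open U" and Z: "Ck 2 U Z" and c: "\<And>x. x \<in> U \<Longrightarrow> pd_u Z x \<times> pd_v Z x \<noteq> 0"
    and x: "x \<in> U"
  defines "Dn \<equiv> frechet_derivative (unit_normal Z) (at x)"
  shows "Dn h \<bullet> pd_u Z x = - (unit_normal Z x \<bullet> frechet_derivative (pd_u Z) (at x) h)"
    and "Dn h \<bullet> pd_v Z x = - (unit_normal Z x \<bullet> frechet_derivative (pd_v Z) (at x) h)"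
    and "Dn h \<bullet> unit_normal Z x = 0"
proof -
  have dn: "(unit_normal Z has_derivative Dn) (at x)"
    unfolding Dn_def using Ck1_has_derivative[OF U unit_normal_Ck1[OF U Z c] x] .
  have da: "(pd_u Z has_derivative frechet_derivative (pd_u Z) (at x)) (at x)"
    and db: "(pd_v Z has_derivative frechet_derivative (pd_v Z) (at x)) (at x)"
    using Ck1_has_derivative[OF U Ck2_pd_Ck1(1)[OF Z] x] Ck1_has_derivative[OF U Ck2_pd_Ck1(2)[OF Z] x]
    by auto
  show "Dn h \<bullet> pd_u Z x = - (unit_normal Z x \<bullet> frechet_derivative (pd_u Z) (at x) h)"
    using has_derivative_inner_const[OF U x _ dn da, of 0 h] unit_normal_orthogonal(1)
    by (simp add: eq_neg_iff_add_eq_0 add.commute)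
  show "Dn h \<bullet> pd_v Z x = - (unit_normal Z x \<bullet> frechet_derivative (pd_v Z) (at x) h)"
    using has_derivative_inner_const[OF U x _ dn db, of 0 h] unit_normal_orthogonal(2)
    by (simp add: eq_neg_iff_add_eq_0 add.commute)
  have "unit_normal Z y \<bullet> unit_normal Z y = 1" if "y \<in> U" for y
    using norm_unit_normal[OF c[OF that]] by (simp add: dot_square_norm)
  then show "Dn h \<bullet> unit_normal Z x = 0"
    using has_derivative_inner_const[OF U x _ dn dn, of 1 h] by (simp add: inner_commute)
qed

lemma flat_gauss_map_rank_le_1:
  assumes U: "open U" and Z: "Ck 2 U Z" and c: "\<And>x. x \<in> U \<Longrightarrow> pd_u Z x \<times> pd_v Z x \<noteq> 0"
    and x: "x \<in> U" and flat: "gauss_curv Z x = 0"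
  defines "Dn \<equiv> frechet_derivative (unit_normal Z) (at x)"
  shows "Dn (axis 1 1) \<times> Dn (axis 2 1) = 0"
proof -
  define n where "n = unit_normal Z x"
  define L where "L = n \<bullet> frechet_derivative (pd_u Z) (at x) (axis 1 1)"
  define M where "M = n \<bullet> frechet_derivative (pd_u Z) (at x) (axis 2 1)"
  define N where "N = n \<bullet> frechet_derivative (pd_v Z) (at x) (axis 2 1)"
  have "pd_u (pd_u Z) x \<bullet> n = L" "pd_v (pd_u Z) x \<bullet> n = M" "pd_v (pd_v Z) x \<bullet> n = N"
    by (simp_all add: L_def M_def N_def pd_u_def[of "pd_u Z"] pd_v_def[of "pd_u Z"]
        pd_v_def[of "pd_v Z"] inner_commute)
  then have "L * N - M\<^sup>2 = 0"
    using flat c[OF x] by (simp add: gauss_curv_unit_normal n_def)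
  moreover have "M = n \<bullet> frechet_derivative (pd_v Z) (at x) (axis 1 1)"
    using pd_v_pd_u_commute[OF U Z x]
    by (simp add: M_def pd_u_def[of "pd_v Z"] pd_v_def[of "pd_u Z"])
  then have "Dn (axis 1 1) \<bullet> pd_u Z x = - L" "Dn (axis 2 1) \<bullet> pd_u Z x = - M"
    "Dn (axis 1 1) \<bullet> pd_v Z x = - M" "Dn (axis 2 1) \<bullet> pd_v Z x = - N"
    using weingarten_equations(1,2)[OF U Z c x]
    unfolding Dn_def L_def M_def N_def n_def by simp_all
  moreover have "Dn h \<bullet> (pd_u Z x \<times> pd_v Z x) = 0" for h
    using weingarten_equations(3)[OF U Z c x] cross_eq_norm_scaleR_unit_normal[of Z x]
    unfolding Dn_def by (metis inner_scaleR_right mult_zero_right)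
  \<comment> \<open>By the Weingarten equations \<open>LN - M\<^sup>2\<close> is the minor \<open>(Dn e\<^sub>i \<bullet> X\<^sub>j)\<close>, and both
    \<open>Dn e\<^sub>i\<close> lie in the tangent plane.\<close>
  ultimately show ?thesis
    using c[OF x]
    by (intro cross_eq_0_if_orthogonal_det[where a = "pd_u Z x" and b = "pd_v Z x"])
       (simp_all add: power2_eq_square)
qed

lemma flat_gauss_map_rank_le_1_lower_halfplane:
  assumes U: "open U" and Z: "Ck 2 U Z" and c: "\<And>x. x \<in> U \<Longrightarrow> pd_u Z x \<times> pd_v Z x \<noteq> 0"
    and flat: "\<And>x. x \<in> U \<Longrightarrow> x$2 < 0 \<Longrightarrow> gauss_curv Z x = 0"
    and x: "x \<in> U" "x$2 \<le> 0"
  shows "frechet_derivative (unit_normal Z) (at x) (axis 1 1) \<times>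
         frechet_derivative (unit_normal Z) (at x) (axis 2 1) = 0"
proof (rule continuous_on_eq_0_on_lower_halfplane[OF U x])
  show "continuous_on U (\<lambda>x. frechet_derivative (unit_normal Z) (at x) (axis 1 1) \<times>
                            frechet_derivative (unit_normal Z) (at x) (axis 2 1))"
    by (intro continuous_on_cross Ck1_continuous_derivative[OF unit_normal_Ck1[OF U Z c]])
qed (simp add: flat_gauss_map_rank_le_1[OF U Z c] flat)

section \<open>Integral curves of the kernel of the Gauss map\<close>

lemma dist_le_if_same_first_coordinate:
  fixes x y z :: "real^2"
  assumes "x$1 = y$1" "\<bar>x$2 - z$2\<bar> \<le> \<bar>y$2 - z$2\<bar>"
  shows "dist x z \<le> dist y z"
proof -
  have "(x$2 - z$2)\<^sup>2 \<le> (y$2 - z$2)\<^sup>2"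
    using assms(2) abs_le_square_iff by blast
  then have "(dist x z)\<^sup>2 \<le> (dist y z)\<^sup>2"
    using assms(1) by (simp add: dist_vec_def L2_set_def sum_2 power2_eq_square dist_real_def)
  then show ?thesis
    by (rule power2_le_imp_le) simp
qed

text \<open>The chart \<open>(u, v) \<mapsto> (n\<^sub>k(u, v), v)\<close>: where \<open>dn\<close> has rank one and
  \<open>\<partial>n\<^sub>k/\<partial>u \<noteq> 0\<close>, the kernel lines of \<open>dn\<close> become vertical in it.\<close>

definition normal_component_chart :: "(real^2 \<Rightarrow> real^3) \<Rightarrow> 3 \<Rightarrow> real^2 \<Rightarrow> real^2" where
  "normal_component_chart n k y = (n y $ k) *\<^sub>R axis 1 1 + (y $ 2) *\<^sub>R axis 2 1"

lemma normal_component_chart_nth [simp]: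
  "normal_component_chart n k y $ 1 = n y $ k" "normal_component_chart n k y $ 2 = y $ 2"
  by (simp_all add: normal_component_chart_def axis_def)

lemma frechet_derivative_normal_component_chart:
  fixes n :: "real^2 \<Rightarrow> real^3" and k :: 3 and x :: "real^2"
  defines "D \<equiv> \<lambda>h. (frechet_derivative n (at x) h $ k) *\<^sub>R axis 1 1 + (h $ 2) *\<^sub>R axis 2 1"
  assumes U: "open U" and n: "Ck 1 U n" and x: "x \<in> U"
  shows "(normal_component_chart n k has_derivative D) (at x)"
    and "frechet_derivative (normal_component_chart n k) (at x) = D"
proof -
  have "((\<lambda>y. n y $ k) has_derivative (\<lambda>h. frechet_derivative n (at x) h $ k)) (at x)"
    using bounded_linear.has_derivative[OF bounded_linear_vec_nth Ck1_has_derivative[OF U n x]] .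
  moreover have "((\<lambda>y. y $ 2) has_derivative (\<lambda>h. h $ 2)) (at x)"
    using bounded_linear.has_derivative[OF bounded_linear_vec_nth has_derivative_ident] .
  ultimately show *: "(normal_component_chart n k has_derivative D) (at x)"
    unfolding normal_component_chart_def[abs_def] D_def by (intro derivative_intros)
  show "frechet_derivative (normal_component_chart n k) (at x) = D"
    using * by (rule frechet_derivative_at[symmetric])
qed

lemma normal_component_chart_Ck1:
  assumes U: "open U" and n: "Ck 1 U n"
  shows "Ck 1 U (normal_component_chart n k)"
proof -
  have "continuous_on U (\<lambda>x. frechet_derivative (normal_component_chart n k) (at x) h)" for h
    using Ck1_continuous_derivative[OF n]
    by (simp add: frechet_derivative_normal_component_chart(2)[OF U n] cong: continuous_on_cong)
       (intro continuous_intros)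
  moreover have "normal_component_chart n k differentiable_on U"
    using frechet_derivative_normal_component_chart(1)[OF U n]
    by (auto intro: differentiable_at_imp_differentiable_on differentiableI)
  ultimately show ?thesis
    by simp
qed

lemma inj_frechet_derivative_normal_component_chart:
  assumes U: "open U" and n: "Ck 1 U n" and x: "x \<in> U"
  shows "inj (frechet_derivative (normal_component_chart n k) (at x)) \<longleftrightarrow>
         frechet_derivative n (at x) (axis 1 1) $ k \<noteq> 0"
proof -
  define Dn where "Dn = frechet_derivative n (at x)"
  define D where "D = frechet_derivative (normal_component_chart n k) (at x)"
  have lin: "linear Dn" "linear D"
    unfolding Dn_def D_def using Ck1_has_derivative[OF U n x] has_derivative_linear
      frechet_derivative_normal_component_chart[OF U n x] by metis+
  have D1: "D h $ 1 = Dn h $ k" and D2: "D h $ 2 = h $ 2" for h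
    by (simp_all add: D_def Dn_def frechet_derivative_normal_component_chart(2)[OF U n x] axis_def)
  show ?thesis
    unfolding D_def[symmetric] Dn_def[symmetric]
  proof
    assume "inj D"
    then have "D (axis 1 1) \<noteq> 0"
      using lin(2) by (auto simp: linear_inj_iff_eq_0 dest: spec[of _ "axis 1 1"])
    then show "Dn (axis 1 1) $ k \<noteq> 0"
      using D1[of "axis 1 1"] D2[of "axis 1 1"] by (simp add: vec_eq_iff forall_2 axis_def)
  next
    assume k: "Dn (axis 1 1) $ k \<noteq> 0"
    have "h = 0" if "D h = 0" for h
    proof -
      have "h $ 2 = 0" and "Dn h $ k = 0"
        using D1[of h] D2[of h] that by simp_all
      then have "h $ 1 * Dn (axis 1 1) $ k = 0"
        using linear_real2_expand[OF lin(1), of h] by simp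
      then show "h = 0"
        using k \<open>h $ 2 = 0\<close> by (simp add: vec_eq_iff forall_2)
    qed
    then show "inj D"
      using lin(2) by (simp add: linear_inj_iff_eq_0)
  qed
qed

lemma normal_component_chart_kernel:
  assumes U: "open U" and n: "Ck 1 U n" and x: "x \<in> U"
    and rank: "frechet_derivative n (at x) (axis 1 1) \<times> frechet_derivative n (at x) (axis 2 1) = 0"
    and inj: "inj (frechet_derivative (normal_component_chart n k) (at x))"
    and h: "frechet_derivative (normal_component_chart n k) (at x) h = axis 2 1"
  shows "frechet_derivative n (at x) h = 0"
proof (rule rank_le_1_linear_eq_0[OF _ rank])
  show "linear (frechet_derivative n (at x))"
    using Ck1_has_derivative[OF U n x] has_derivative_linear by blast
  show "frechet_derivative n (at x) (axis 1 1) $ k \<noteq> 0"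
    using inj inj_frechet_derivative_normal_component_chart[OF U n x] by blast
  show "frechet_derivative n (at x) h $ k = 0"
    using arg_cong[OF h, of "\<lambda>y. y $ 1"]
    by (simp add: frechet_derivative_normal_component_chart(2)[OF U n x] axis_def)
qed

lemma kernel_curve_from_vertical_segment:
  fixes n :: "real^2 \<Rightarrow> real^3" and k :: 3
  defines "\<Phi> \<equiv> normal_component_chart n k"
  assumes U: "open U" and n: "Ck 1 U n"
    and rank: "\<And>x. x \<in> U \<Longrightarrow> x$2 \<le> 0 \<Longrightarrow>
      frechet_derivative n (at x) (axis 1 1) \<times> frechet_derivative n (at x) (axis 2 1) = 0"
    and U': "U' \<subseteq> U" and hom: "homeomorphism U' V \<Phi> g"
    and dg: "\<And>y. y \<in> V \<Longrightarrow> (g has_derivative g' y) (at y)"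
    and bij: "\<And>y. y \<in> V \<Longrightarrow> bij (frechet_derivative \<Phi> (at (g y)))"
    and inv: "\<And>y h. y \<in> V \<Longrightarrow> frechet_derivative \<Phi> (at (g y)) (g' y h) = h"
    and w: "w \<in> U'" "w$2 \<le> 0"
    and segment: "\<And>\<tau>. \<tau> \<in> {w$2..0} \<Longrightarrow> (n w $ k) *\<^sub>R axis 1 1 + \<tau> *\<^sub>R axis 2 1 \<in> V"
  shows "\<exists>G v. G (w$2) = w \<and> G 0 $ 2 = 0 \<and>
    (\<forall>\<tau>\<in>{w$2..0}. G \<tau> \<in> U \<and> (G has_derivative (\<lambda>h. h *\<^sub>R v \<tau>)) (at \<tau>) \<and>
                    frechet_derivative n (at (G \<tau>)) (v \<tau>) = 0)"
proof -
  define P :: "real \<Rightarrow> real^2" where "P \<tau> = (n w $ k) *\<^sub>R axis 1 1 + \<tau> *\<^sub>R axis 2 1" for \<tau>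
  have PV: "P \<tau> \<in> V" if "\<tau> \<in> {w$2..0}" for \<tau>
    using segment[OF that] by (simp add: P_def)
  have gP: "g (P \<tau>) \<in> U'" "\<Phi> (g (P \<tau>)) = P \<tau>" if "\<tau> \<in> {w$2..0}" for \<tau>
    using hom PV[OF that] by (auto simp: homeomorphism_def)
  show ?thesis
  proof (intro exI conjI ballI)
    have "P (w$2) = \<Phi> w"
      by (simp add: P_def \<Phi>_def normal_component_chart_def)
    then show "g (P (w$2)) = w"
      using hom w by (auto simp: homeomorphism_def)
    have "0 \<in> {w$2..0}"
      using w by simp
    from arg_cong[OF gP(2)[OF this], of "\<lambda>y. y $ 2"]
    show "g (P 0) $ 2 = 0"
      by (simp add: P_def \<Phi>_def axis_def)
  next
    fix \<tau> assume \<tau>: "\<tau> \<in> {w$2..0}"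
    show "g (P \<tau>) \<in> U"
      using gP(1)[OF \<tau>] U' by blast
    have "(P has_derivative (\<lambda>h. h *\<^sub>R axis 2 1)) (at \<tau>)"
      unfolding P_def[abs_def] by (auto intro!: derivative_eq_intros)
    from has_derivative_compose[OF this dg[OF PV[OF \<tau>]]]
    show "((\<lambda>t. g (P t)) has_derivative (\<lambda>h. h *\<^sub>R g' (P \<tau>) (axis 2 1))) (at \<tau>)"
      using linear_scale[OF has_derivative_linear[OF dg[OF PV[OF \<tau>]]]] by simp
    have "g (P \<tau>) $ 2 = \<tau>"
      using arg_cong[OF gP(2)[OF \<tau>], of "\<lambda>y. y $ 2"] by (simp add: P_def \<Phi>_def axis_def)
    then show "frechet_derivative n (at (g (P \<tau>))) (g' (P \<tau>) (axis 2 1)) = 0"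
      using \<tau> gP(1)[OF \<tau>] U' bij[OF PV[OF \<tau>]] inv[OF PV[OF \<tau>]]
      by (intro normal_component_chart_kernel[OF U n, where k = k] rank)
         (auto simp: \<Phi>_def bij_is_inj)
  qed
qed

lemma kernel_curves_reach_axis:
  fixes n :: "real^2 \<Rightarrow> real^3" and k :: 3
  assumes U: "open U" and n: "Ck 1 U n" and p: "p \<in> U" "p$2 = 0"
    and k: "frechet_derivative n (at p) (axis 1 1) $ k \<noteq> 0"
    and rank: "\<And>x. x \<in> U \<Longrightarrow> x$2 \<le> 0 \<Longrightarrow>
      frechet_derivative n (at x) (axis 1 1) \<times> frechet_derivative n (at x) (axis 2 1) = 0"
  obtains V where "openin (top_of_set {x. x$2 \<le> 0}) V" "p \<in> V" "V \<subseteq> U"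
    "\<And>w. w \<in> V \<Longrightarrow> \<exists>G v. G (w$2) = w \<and> G 0 $ 2 = 0 \<and>
      (\<forall>\<tau>\<in>{w$2..0}. G \<tau> \<in> U \<and> (G has_derivative (\<lambda>h. h *\<^sub>R v \<tau>)) (at \<tau>) \<and>
                      frechet_derivative n (at (G \<tau>)) (v \<tau>) = 0)"
proof -
  define \<Phi> where "\<Phi> = normal_component_chart n k"
  have \<Phi>: "Ck 1 U \<Phi>"
    unfolding \<Phi>_def using normal_component_chart_Ck1[OF U n] .
  have "inj (frechet_derivative \<Phi> (at p))"
    unfolding \<Phi>_def using inj_frechet_derivative_normal_component_chart[OF U n p(1)] k by blast
  then obtain U' V g g' where U': "open U'" "U' \<subseteq> U" "p \<in> U'" "open V" "\<Phi> p \<in> V"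
    and inverse: "homeomorphism U' V \<Phi> g"
      "\<And>y. y \<in> V \<Longrightarrow> (g has_derivative g' y) (at y)"
      "\<And>y. y \<in> V \<Longrightarrow> bij (frechet_derivative \<Phi> (at (g y)))"
      "\<And>y h. y \<in> V \<Longrightarrow> frechet_derivative \<Phi> (at (g y)) (g' y h) = h"
    by (rule inverse_function_theorem_Ck1[OF U \<Phi> p(1)]) blast
  obtain \<epsilon> where \<epsilon>: "\<epsilon> > 0" "ball (\<Phi> p) \<epsilon> \<subseteq> V"
    using U'(4,5) open_contains_ball by blast
  define W where "W = {w\<in>U'. \<Phi> w \<in> ball (\<Phi> p) \<epsilon> \<and> w$2 \<le> 0}"
  show ?thesis
  proof (rule that[of W])
    have "open (U' \<inter> \<Phi> -` ball (\<Phi> p) \<epsilon>)"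
      using continuous_on_subset[OF Ck1_continuous[OF \<Phi>] U'(2)] U'(1)
      by (rule continuous_open_preimage) simp
    moreover have "W = {x. x$2 \<le> 0} \<inter> (U' \<inter> \<Phi> -` ball (\<Phi> p) \<epsilon>)"
      by (auto simp: W_def)
    ultimately show "openin (top_of_set {x. x$2 \<le> 0}) W"
      by auto
    show "p \<in> W" "W \<subseteq> U"
      using U'(2,3) \<epsilon>(1) p(2) by (auto simp: W_def)
  next
    fix w assume w: "w \<in> W"
    have "(n w $ k) *\<^sub>R axis 1 1 + \<tau> *\<^sub>R axis 2 1 \<in> V" if "\<tau> \<in> {w$2..0}" for \<tau>
    proof -
      have "dist ((n w $ k) *\<^sub>R axis 1 1 + \<tau> *\<^sub>R axis 2 1) (\<Phi> p) \<le> dist (\<Phi> w) (\<Phi> p)"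
        using that p(2) by (intro dist_le_if_same_first_coordinate) (simp_all add: \<Phi>_def axis_def)
      then show ?thesis
        using w \<epsilon>(2) by (auto simp: W_def dist_commute)
    qed
    with w show "\<exists>G v. G (w$2) = w \<and> G 0 $ 2 = 0 \<and>
      (\<forall>\<tau>\<in>{w$2..0}. G \<tau> \<in> U \<and> (G has_derivative (\<lambda>h. h *\<^sub>R v \<tau>)) (at \<tau>) \<and>
                      frechet_derivative n (at (G \<tau>)) (v \<tau>) = 0)"
      using kernel_curve_from_vertical_segment[OF U n rank U'(2) inverse[unfolded \<Phi>_def]]
      by (simp add: W_def \<Phi>_def)
  qed
qed

lemma normal_and_support_constant_along_kernel_curve:
  assumes U: "open U" and Z: "Ck 2 U Z" and c: "\<And>x. x \<in> U \<Longrightarrow> pd_u Z x \<times> pd_v Z x \<noteq> 0"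
    and ab: "a \<le> b"
    and curve: "\<And>\<tau>. \<tau> \<in> {a..b} \<Longrightarrow> G \<tau> \<in> U \<and> (G has_derivative (\<lambda>h. h *\<^sub>R v \<tau>)) (at \<tau>) \<and>
                  frechet_derivative (unit_normal Z) (at (G \<tau>)) (v \<tau>) = 0"
  shows "unit_normal Z (G a) = unit_normal Z (G b)"
    and "Z (G a) \<bullet> unit_normal Z (G a) = Z (G b) \<bullet> unit_normal Z (G b)"
proof -
  define n where "n = unit_normal Z"
  have dn: "(n has_derivative frechet_derivative n (at x)) (at x)"
    and dZ: "(Z has_derivative frechet_derivative Z (at x)) (at x)" if "x \<in> U" for x
    using Ck1_has_derivative[OF U unit_normal_Ck1[OF U Z c] that]
      Ck1_has_derivative[OF U Ck2_Ck1[OF Z] that] by (auto simp: n_def)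
  show "unit_normal Z (G a) = unit_normal Z (G b)"
    using curve ab unfolding n_def[symmetric]
    by (intro constant_along_curve_in_kernel[where DF = "\<lambda>x. frechet_derivative n (at x)"] dn) auto
  show "Z (G a) \<bullet> unit_normal Z (G a) = Z (G b) \<bullet> unit_normal Z (G b)"
    unfolding n_def[symmetric]
  proof (rule constant_along_curve_in_kernel[where F = "\<lambda>x. Z x \<bullet> n x", OF ab])
    fix \<tau> assume \<tau>: "\<tau> \<in> {a..b}"
    show "((\<lambda>x. Z x \<bullet> n x) has_derivative (\<lambda>h. Z (G \<tau>) \<bullet> frechet_derivative n (at (G \<tau>)) h +
        frechet_derivative Z (at (G \<tau>)) h \<bullet> n (G \<tau>))) (at (G \<tau>))"
      using curve[OF \<tau>] by (intro has_derivative_inner dZ dn) auto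
    show "Z (G \<tau>) \<bullet> frechet_derivative n (at (G \<tau>)) (v \<tau>) +
        frechet_derivative Z (at (G \<tau>)) (v \<tau>) \<bullet> n (G \<tau>) = 0"
      using curve[OF \<tau>] unit_normal_orthogonal_derivative[OF has_derivative_linear[OF dZ]]
      by (simp add: n_def)
  qed (use curve in auto)
qed

lemma flat_side_reaches_axis:
  assumes U: "open U" and Z: "Ck 2 U Z" and c: "\<And>x. x \<in> U \<Longrightarrow> pd_u Z x \<times> pd_v Z x \<noteq> 0"
    and flat: "\<And>x. x \<in> U \<Longrightarrow> x$2 < 0 \<Longrightarrow> gauss_curv Z x = 0"
    and p: "p \<in> U" "p$2 = 0"
    and imm: "frechet_derivative (unit_normal Z) (at p) (axis 1 1) \<noteq> 0"
  obtains V where "openin (top_of_set {x. x$2 \<le> 0}) V" "p \<in> V" "V \<subseteq> U"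
    "\<And>w. w \<in> V \<Longrightarrow> \<exists>w0\<in>U. w0$2 = 0 \<and> unit_normal Z w = unit_normal Z w0 \<and>
                          Z w \<bullet> unit_normal Z w = Z w0 \<bullet> unit_normal Z w0"
proof -
  have n: "Ck 1 U (unit_normal Z)"
    using unit_normal_Ck1[OF U Z c] .
  have "\<exists>k. frechet_derivative (unit_normal Z) (at p) (axis 1 1) $ k \<noteq> 0"
    using imm by (simp add: vec_eq_iff)
  then obtain k where k: "frechet_derivative (unit_normal Z) (at p) (axis 1 1) $ k \<noteq> 0"
    by blast
  show ?thesis
  proof (rule kernel_curves_reach_axis[OF U n p k flat_gauss_map_rank_le_1_lower_halfplane[OF U Z c flat]])
    fix V assume V: "openin (top_of_set {x. x$2 \<le> 0}) V" "p \<in> V" "V \<subseteq> U"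
      and curves: "\<And>w. w \<in> V \<Longrightarrow> \<exists>G v. G (w$2) = w \<and> G 0 $ 2 = 0 \<and>
        (\<forall>\<tau>\<in>{w$2..0}. G \<tau> \<in> U \<and> (G has_derivative (\<lambda>h. h *\<^sub>R v \<tau>)) (at \<tau>) \<and>
                        frechet_derivative (unit_normal Z) (at (G \<tau>)) (v \<tau>) = 0)"
    show ?thesis
    proof (rule that[OF V])
      fix w assume w: "w \<in> V"
      then have w2: "w$2 \<le> 0"
        using openin_subset[OF V(1)] by auto
      obtain G v where G: "G (w$2) = w" "G 0 $ 2 = 0"
        and curve: "\<forall>\<tau>\<in>{w$2..0}. G \<tau> \<in> U \<and> (G has_derivative (\<lambda>h. h *\<^sub>R v \<tau>)) (at \<tau>) \<and>
                        frechet_derivative (unit_normal Z) (at (G \<tau>)) (v \<tau>) = 0"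
        using curves[OF w] by blast
      show "\<exists>w0\<in>U. w0$2 = 0 \<and> unit_normal Z w = unit_normal Z w0 \<and>
                          Z w \<bullet> unit_normal Z w = Z w0 \<bullet> unit_normal Z w0"
        using normal_and_support_constant_along_kernel_curve[OF U Z c w2 bspec[OF curve]]
          G curve w2 by auto
    qed
  qed
qed

section \<open>The flat extension near the boundary curve\<close>

lemma bpt_nth [simp]: "bpt t $ 1 = t" "bpt t $ 2 = 0"
  by (simp_all add: bpt_def)

lemma bpt_eq_scaleR_axis: "bpt t = t *\<^sub>R axis 1 1"
  by (simp add: vec_eq_iff forall_2 axis_def)

lemma bpt_nth_1_eq: "w$2 = 0 \<Longrightarrow> bpt (w$1) = w"
  by (simp add: vec_eq_iff forall_2)

lemma dist_bpt: "dist (bpt s) (bpt t) = dist s t"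
  by (simp add: bpt_eq_scaleR_axis dist_norm flip: scaleR_diff_left)

lemma frechet_derivative_along_axis_neq_0:
  fixes n N :: "real^2 \<Rightarrow> real^3"
  assumes dN: "((\<lambda>s. N (bpt s)) has_vector_derivative d) (at t)" "d \<noteq> 0"
    and r: "r > 0" and eq: "\<And>x. x \<in> ball (bpt t) r \<Longrightarrow> x$2 \<le> 0 \<Longrightarrow> N x = \<sigma> *\<^sub>R n x"
    and dn: "n differentiable at (bpt t)"
  shows "frechet_derivative n (at (bpt t)) (axis 1 1) \<noteq> 0"
proof -
  define Dn where "Dn = frechet_derivative n (at (bpt t))"
  have "(bpt has_derivative (\<lambda>h. h *\<^sub>R axis 1 1)) (at t)"
    unfolding bpt_eq_scaleR_axis[abs_def] by (auto intro!: derivative_eq_intros)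
  from has_derivative_compose[OF this dn[unfolded frechet_derivative_works]]
  have "((\<lambda>s. \<sigma> *\<^sub>R n (bpt s)) has_vector_derivative \<sigma> *\<^sub>R Dn (axis 1 1)) (at t)"
    using linear_scale[OF has_derivative_linear[OF dn[unfolded frechet_derivative_works]]]
    by (auto simp: has_vector_derivative_def Dn_def intro!: derivative_eq_intros)
  then have "((\<lambda>s. N (bpt s)) has_vector_derivative \<sigma> *\<^sub>R Dn (axis 1 1)) (at t)"
    by (rule has_vector_derivative_transform_within_open[where S = "ball t r"])
       (use r eq in \<open>auto simp: dist_bpt\<close>)
  then have "d = \<sigma> *\<^sub>R Dn (axis 1 1)"
    using dN(1) vector_derivative_unique_at by blast
  then show ?thesis
    using dN(2) by (auto simp: Dn_def)
qed

lemma cross_pd_neq_0_near: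
  assumes U: "open U" and Z: "Ck 2 U Z" and p: "p \<in> U" "pd_u Z p \<times> pd_v Z p \<noteq> 0"
  obtains r where "r > 0" "ball p r \<subseteq> U" "\<And>x. x \<in> ball p r \<Longrightarrow> pd_u Z x \<times> pd_v Z x \<noteq> 0"
proof -
  have "continuous_on U (\<lambda>x. pd_u Z x \<times> pd_v Z x)"
    using Ck1_continuous[OF Ck2_pd_Ck1(1)[OF Z]] Ck1_continuous[OF Ck2_pd_Ck1(2)[OF Z]]
    by (intro continuous_on_cross)
  then have "open (U \<inter> (\<lambda>x. pd_u Z x \<times> pd_v Z x) -` (- {0}))"
    using U by (intro continuous_open_preimage) auto
  then obtain r where "r > 0" "ball p r \<subseteq> U \<inter> (\<lambda>x. pd_u Z x \<times> pd_v Z x) -` (- {0})"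
    using p open_contains_ball by blast
  then show ?thesis
    using that by blast
qed

lemma normal_eq_sign_unit_normal:
  assumes U: "open U" and Z: "Ck 2 U Z" and c: "\<And>x. x \<in> U \<Longrightarrow> pd_u Z x \<times> pd_v Z x \<noteq> 0"
    and S: "connected S" "S \<subseteq> U"
    and N: "continuous_on S N" "\<And>x. x \<in> S \<Longrightarrow> norm (N x) = 1"
      "\<And>x h. x \<in> S \<Longrightarrow> N x \<bullet> frechet_derivative Z (at x) h = 0"
  obtains \<sigma> :: real where "\<sigma> = 1 \<or> \<sigma> = -1" "\<And>x. x \<in> S \<Longrightarrow> N x = \<sigma> *\<^sub>R unit_normal Z x"
proof (rule continuous_parallel_unit_fields[OF S(1) N(1)])
  show "continuous_on S (unit_normal Z)"
    using continuous_on_subset[OF Ck1_continuous[OF unit_normal_Ck1[OF U Z c]] S(2)] .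
  show "norm (N x) = 1 \<and> norm (unit_normal Z x) = 1" if "x \<in> S" for x
    using N(2) norm_unit_normal c S(2) that by blast
  show "N x \<times> unit_normal Z x = 0" if "x \<in> S" for x
    using N(3)[OF that] by (intro orthogonal_imp_parallel_unit_normal) (auto simp: pd_u_def pd_v_def)
qed (use that in blast)

lemma pi2_legendre_lift_subset_dual_boundary:
  assumes "\<And>w. w \<in> V \<Longrightarrow> \<exists>w0\<in>W. w0$2 = 0 \<and> N w = N w0 \<and> X w \<bullet> N w = X w0 \<bullet> N w0"
  shows "pi2 ` legendre_lift X N V \<subseteq> dual_boundary X N {t. bpt t \<in> W}"
proof (clarsimp simp: legendre_lift_def)
  fix w assume "w \<in> V"
  then obtain w0 where "w0 \<in> W" "w0$2 = 0" "N w = N w0" "X w \<bullet> N w = X w0 \<bullet> N w0"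
    using assms by blast
  then show "pi2 (X w, N w) \<in> dual_boundary X N {t. bpt t \<in> W}"
    unfolding dual_boundary_def pi2_def using bpt_nth_1_eq[of w0]
    by (intro image_eqI[of _ _ "w0$1"]) auto
qed

lemma frechet_derivative_flat_extension_eq:
  fixes X Z :: "real^2 \<Rightarrow> 'b::real_normed_vector"
  assumes W: "open W" and W2: "open W2" "{w\<in>W. w$2 \<le> 0} \<subseteq> W2" and Z: "Ck 1 W2 Z"
    and X: "Ck 1 W X" and XZ: "\<And>w. w \<in> W \<Longrightarrow> w$2 \<le> 0 \<Longrightarrow> X w = Z w"
    and w: "w \<in> W" "w$2 \<le> 0"
  shows "frechet_derivative X (at w) = frechet_derivative Z (at w)"
  using w W2 XZ Ck1_has_derivative[OF W X w(1)] Ck1_has_derivative[OF W2(1) Z, of w]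
  by (intro frechet_derivative_eq_on_lower_halfplane[of "W \<inter> W2"]) (auto intro: differentiableI W)

lemma gauss_curv_flat_extension_eq:
  assumes W: "open W" "open W2" and XZ: "\<And>w. w \<in> W \<Longrightarrow> w$2 \<le> 0 \<Longrightarrow> X w = Z w"
    and x: "x \<in> W \<inter> W2" "x$2 < 0"
  shows "gauss_curv X x = gauss_curv Z x"
proof (rule gauss_curv_cong_open)
  have "open {y :: real^2. y$2 < 0}"
    using open_halfspace_lt[of "axis 2 1 :: real^2" 0] by (simp add: inner_axis')
  then show "open (W \<inter> W2 \<inter> {y. y$2 < 0})"
    using W by blast
qed (use x XZ in auto)

lemma flat_extension_near_boundary_point:
  assumes W: "open W" and W2: "open W2" "{w\<in>W. w$2 \<le> 0} \<subseteq> W2" and Z: "Ck 2 W2 Z"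
    and X: "Ck 1 W X" "\<And>w. w \<in> W \<Longrightarrow> inj (frechet_derivative X (at w))"
    and XZ: "\<And>w. w \<in> W \<Longrightarrow> w$2 \<le> 0 \<Longrightarrow> X w = Z w"
    and flat: "\<And>w. w \<in> W \<Longrightarrow> w$2 < 0 \<Longrightarrow> gauss_curv X w = 0"
    and N: "continuous_on W N" "\<And>w. w \<in> W \<Longrightarrow> norm (N w) = 1"
      "\<And>w h. w \<in> W \<Longrightarrow> N w \<bullet> frechet_derivative X (at w) h = 0"
    and p: "p \<in> W" "p$2 \<le> 0"
  obtains r \<sigma> where "r > 0" "ball p r \<subseteq> W \<inter> W2"
    "\<And>x. x \<in> ball p r \<Longrightarrow> pd_u Z x \<times> pd_v Z x \<noteq> 0"
    "\<And>x. x \<in> ball p r \<Longrightarrow> x$2 < 0 \<Longrightarrow> gauss_curv Z x = 0"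
    "\<And>x. x \<in> ball p r \<Longrightarrow> x$2 \<le> 0 \<Longrightarrow> N x = \<sigma> *\<^sub>R unit_normal Z x"
proof -
  have dXZ: "frechet_derivative X (at w) = frechet_derivative Z (at w)" if "w \<in> W" "w$2 \<le> 0" for w
    by (rule frechet_derivative_flat_extension_eq[OF W W2 Ck2_Ck1[OF Z] X(1)]) (use XZ that in auto)
  have U: "open (W \<inter> W2)" and pU: "p \<in> W \<inter> W2" and ZU: "Ck 2 (W \<inter> W2) Z"
    using W W2 p Ck_subset[OF Z] by auto
  have "inj (frechet_derivative Z (at p))"
    using X(2)[OF p(1)] dXZ[OF p] by simp
  then have "pd_u Z p \<times> pd_v Z p \<noteq> 0"
    using inj_linear_cross_axis_neq_0[OF has_derivative_linear[OF
        Ck1_has_derivative[OF W2(1) Ck2_Ck1[OF Z]]]] pU by (simp add: pd_u_def pd_v_def)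
  then obtain r where r: "r > 0" "ball p r \<subseteq> W \<inter> W2"
    and c: "\<And>x. x \<in> ball p r \<Longrightarrow> pd_u Z x \<times> pd_v Z x \<noteq> 0"
    using cross_pd_neq_0_near[OF U ZU pU] by blast
  have Zr: "Ck 2 (ball p r) Z"
    using Ck_subset[OF Z] r(2) by blast
  define B where "B = ball p r \<inter> {x. x$2 \<le> 0}"
  obtain \<sigma> :: real where N\<sigma>: "\<And>x. x \<in> B \<Longrightarrow> N x = \<sigma> *\<^sub>R unit_normal Z x"
  proof (rule normal_eq_sign_unit_normal[OF open_ball Zr c])
    show "connected B"
      using convex_halfspace_le[of "axis 2 1 :: real^2" 0] unfolding B_def
      by (intro convex_connected convex_Int convex_ball) (simp add: inner_axis')
    show "B \<subseteq> ball p r"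
      by (simp add: B_def)
    have "B \<subseteq> W"
      using r(2) by (auto simp: B_def)
    then show "continuous_on B N"
      using continuous_on_subset[OF N(1)] by blast
    show "norm (N x) = 1" "N x \<bullet> frechet_derivative Z (at x) h = 0" if "x \<in> B" for x h
      using N(2,3)[of x] dXZ[of x] r(2) that by (auto simp: B_def)
  qed (assumption, rule that)
  have flatZ: "gauss_curv Z x = 0" if "x \<in> ball p r" "x$2 < 0" for x
  proof -
    have "x \<in> W \<inter> W2"
      using that(1) r(2) by blast
    then show ?thesis
      using gauss_curv_flat_extension_eq[where X = X and Z = Z, OF W W2(1) XZ] flat that(2) by auto
  qed
  have "N x = \<sigma> *\<^sub>R unit_normal Z x" if "x \<in> ball p r" "x$2 \<le> 0" for x
    using N\<sigma> that by (simp add: B_def)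
  with r c flatZ show ?thesis
    by (rule that)
qed

theorem lemma3p7:
  fixes X N :: "real^2 \<Rightarrow> real^3" and W :: "(real^2) set" and p0 :: real
  assumes W_open: "open W"
    and X_C1: "Ck 1 W X"
    and X_immersion: "\<forall>w\<in>W. inj (frechet_derivative X (at w))"
    and N_cont: "continuous_on W N"
    and N_unit: "\<forall>w\<in>W. norm (N w) = 1"
    and N_normal: "\<forall>w\<in>W. \<forall>h. N w \<bullet> frechet_derivative X (at w) h = 0"
    and S_smooth: "\<exists>W1 Y. open W1 \<and> {w\<in>W. w$2 \<ge> 0} \<subseteq> W1 \<and> smooth_on W1 Y \<and>
                        (\<forall>w\<in>W. w$2 \<ge> 0 \<longrightarrow> X w = Y w)"
    and ext_smooth: "\<exists>W2 Z. open W2 \<and> {w\<in>W. w$2 \<le> 0} \<subseteq> W2 \<and> smooth_on W2 Z \<and>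
                        (\<forall>w\<in>W. w$2 \<le> 0 \<longrightarrow> X w = Z w)"
    and ext_flat: "\<forall>w\<in>W. w$2 < 0 \<longrightarrow> gauss_curv X w = 0"
    and gauss_imm: "\<forall>t. bpt t \<in> W \<longrightarrow>
                      (\<exists>d. ((\<lambda>s. N (bpt s)) has_vector_derivative d) (at t) \<and> d \<noteq> 0)"
    and p: "bpt p0 \<in> W"
  shows "\<exists>V. openin (top_of_set {w\<in>W. w$2 \<le> 0}) V \<and> bpt p0 \<in> V \<and>
             pi2 ` legendre_lift X N V \<subseteq> dual_boundary X N {t. bpt t \<in> W}"
proof -
  obtain W2 Z where W2: "open W2" "{w\<in>W. w$2 \<le> 0} \<subseteq> W2" and "smooth_on W2 Z"
    and XZ: "\<And>w. w \<in> W \<Longrightarrow> w$2 \<le> 0 \<Longrightarrow> X w = Z w"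
    using ext_smooth by blast
  then have Z: "Ck 2 W2 Z"
    by (simp add: smooth_on_def)
  define p where "p = bpt p0"
  obtain r \<sigma> where r: "r > 0" "ball p r \<subseteq> W \<inter> W2"
    and c: "\<And>x. x \<in> ball p r \<Longrightarrow> pd_u Z x \<times> pd_v Z x \<noteq> 0"
    and flat: "\<And>x. x \<in> ball p r \<Longrightarrow> x$2 < 0 \<Longrightarrow> gauss_curv Z x = 0"
    and N\<sigma>: "\<And>x. x \<in> ball p r \<Longrightarrow> x$2 \<le> 0 \<Longrightarrow> N x = \<sigma> *\<^sub>R unit_normal Z x"
    using flat_extension_near_boundary_point[OF W_open W2 Z X_C1 _ XZ _ N_cont, of p]
      X_immersion ext_flat N_unit N_normal p by (auto simp: p_def)
  have Zr: "Ck 2 (ball p r) Z"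
    using Ck_subset[OF Z] r(2) by blast
  obtain d where "((\<lambda>s. N (bpt s)) has_vector_derivative d) (at p0)" "d \<noteq> 0"
    using gauss_imm p by blast
  from frechet_derivative_along_axis_neq_0[OF this r(1) N\<sigma>[unfolded p_def]]
  have "frechet_derivative (unit_normal Z) (at p) (axis 1 1) \<noteq> 0"
    using Ck1_has_derivative[OF open_ball unit_normal_Ck1[OF open_ball Zr c], of p] r(1)
    by (auto intro: differentiableI simp: p_def)
  then obtain V where V: "openin (top_of_set {x. x$2 \<le> 0}) V" "p \<in> V" "V \<subseteq> ball p r"
    and axis: "\<And>w. w \<in> V \<Longrightarrow> \<exists>w0\<in>ball p r. w0$2 = 0 \<and> unit_normal Z w = unit_normal Z w0 \<and>
                          Z w \<bullet> unit_normal Z w = Z w0 \<bullet> unit_normal Z w0"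
    using r(1) by (rule_tac flat_side_reaches_axis[OF open_ball Zr c flat]) (auto simp: p_def)
  have lower: "V \<subseteq> {w\<in>W. w$2 \<le> 0}"
    using V(3) openin_subset[OF V(1)] r(2) by auto
  show ?thesis
  proof (intro exI conjI pi2_legendre_lift_subset_dual_boundary)
    show "openin (top_of_set {w\<in>W. w$2 \<le> 0}) V"
      using openin_subset_trans[OF V(1) lower] by auto
    show "bpt p0 \<in> V"
      using V(2) by (simp add: p_def)
    fix w assume "w \<in> V"
    with axis lower V(3) r(2) show "\<exists>w0\<in>W. w0$2 = 0 \<and> N w = N w0 \<and> X w \<bullet> N w = X w0 \<bullet> N w0"
      by (fastforce simp: XZ N\<sigma>)
  qed
qed

end
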